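(* Under the standing assumptions below, suppose in addition that $\{\pi_i\}_{i\in\mathbb{N}_0}$ is orthogonal with respect to $W^{(\alpha)}_\tau$ on $[-1,1]$ (e.g. a family of exceptional Gegenbauer polynomials), let $m\in\mathbb{N}_0$, $t\in\mathbb{R}$ with $1+t\nu_m>0$. Then for all $i\in\mathbb{N}_0$, $$\nu_{m;i}^{-1}=\nu_i^{-1}+\delta_{im}\,t,$$ i.e. $\nu_{m;i}=\nu_i$ for $i\ne m$ and $\nu_{m;m}=\nu_m/(1+t\nu_m)$.
   Context: For a nonzero function $\tau$ and $\alpha\in\mathbb{R}$, $W^{(\alpha)}_\tau=(1-z^2)^{\alpha-1/2}\tau^{-2}$ and $T^{(\alpha)}_\tau=(1-z^2)\left(D_z^2-2\frac{\tau_z}{\tau}D_z+\frac{\tau_{zz}}{\tau}\right)-(2\alpha+1)zD_z+(2\alpha-1)z\frac{\tau_z}{\tau}$. $T^{(\alpha)}_\tau$ is an exceptional Gegenbauer operator if it has polynomial eigenfunctions $\{\pi_i\}_{i\in\mathbb{N}_0}$ of pairwise distinct degrees, with only finitely many nonnegative integers missing from $\{\deg\pi_i\}$. Standing assumptions: $\alpha\in\mathbb{N}_0+\frac12$; $\tau$ is a polynomial with no zeros on $[-1,1]$ such that $T^{(\alpha)}_\tau$ is an exceptional Gegenbauer operator with eigenpolynomials $T^{(\alpha)}_\tau\pi_i=\lambda_i\pi_i$, the $\lambda_i$ pairwise distinct; $\rho_{ij}(z)=\int_{-1}^z\pi_i\pi_jW^{(\alpha)}_\tau\,du$; $\tau_m(z,t)=\tau(z)(1+t\rho_{mm}(z))$;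 $\pi_{m;i}(z,t)=(1+t\rho_{mm})\pi_i-t\rho_{im}\pi_m$; and it is assumed that all $\rho_{ij}$ are rational functions of $z$ and all $\tau_m,\pi_{m;i}$ are polynomials in $z$. Norms: $\nu_i=\int_{-1}^1\pi_i^2W^{(\alpha)}_\tau\,dz$ and $\nu_{m;i}=\int_{-1}^1\pi_{m;i}^2W^{(\alpha)}_{\tau_m}\,dz$. *)

theory Defs
  imports "HOL-Analysis.Analysis" "HOL-Computational_Algebra.Polynomial"
begin

definition xg_weight :: "real \<Rightarrow> (real \<Rightarrow> real) \<Rightarrow> real \<Rightarrow> real" where
  "xg_weight \<alpha> f z = (1 - z\<^sup>2) powr (\<alpha> - 1/2) / (f z)\<^sup>2"

definition xg_op :: "real \<Rightarrow> real poly \<Rightarrow> real poly \<Rightarrow> real \<Rightarrow> real" where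
  "xg_op \<alpha> \<tau> p z =
     (1 - z\<^sup>2) * (poly (pderiv (pderiv p)) z
                   - 2 * (poly (pderiv \<tau>) z / poly \<tau> z) * poly (pderiv p) z
                   + (poly (pderiv (pderiv \<tau>)) z / poly \<tau> z) * poly p z)
     - (2 * \<alpha> + 1) * z * poly (pderiv p) z
     + (2 * \<alpha> - 1) * z * (poly (pderiv \<tau>) z / poly \<tau> z) * poly p z"

definition xg_eigenpoly :: "real \<Rightarrow> real poly \<Rightarrow> real poly \<Rightarrow> real \<Rightarrow> bool" where
  "xg_eigenpoly \<alpha> \<tau> p lam \<longleftrightarrow> p \<noteq> 0 \<and>
     (\<forall>z. poly \<tau> z \<noteq> 0 \<longrightarrow> xg_op \<alpha> \<tau> p z = lam * poly p z)"

definition xg_eigenfamily :: "real \<Rightarrow> real poly \<Rightarrow> (nat \<Rightarrow> real poly) \<Rightarrow> (nat \<Rightarrow> real) \<Rightarrow> bool" where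
  "xg_eigenfamily \<alpha> \<tau> \<pi> lam \<longleftrightarrow>
     (\<forall>i. xg_eigenpoly \<alpha> \<tau> (\<pi> i) (lam i)) \<and>
     inj (\<lambda>i. degree (\<pi> i)) \<and>
     finite (UNIV - range (\<lambda>i. degree (\<pi> i)))"

definition exceptional_gegenbauer_op :: "real \<Rightarrow> real poly \<Rightarrow> bool" where
  "exceptional_gegenbauer_op \<alpha> \<tau> \<longleftrightarrow> (\<exists>\<pi> lam. xg_eigenfamily \<alpha> \<tau> \<pi> lam)"

definition xg_rho :: "real \<Rightarrow> real poly \<Rightarrow> (nat \<Rightarrow> real poly) \<Rightarrow> nat \<Rightarrow> nat \<Rightarrow> real \<Rightarrow> real" where
  "xg_rho \<alpha> \<tau> \<pi> i j z =
     integral {-1..z} (\<lambda>u. poly (\<pi> i) u * poly (\<pi> j) u * xg_weight \<alpha> (poly \<tau>) u)"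

definition xg_tau_m :: "real \<Rightarrow> real poly \<Rightarrow> (nat \<Rightarrow> real poly) \<Rightarrow> nat \<Rightarrow> real \<Rightarrow> real \<Rightarrow> real" where
  "xg_tau_m \<alpha> \<tau> \<pi> m t z = poly \<tau> z * (1 + t * xg_rho \<alpha> \<tau> \<pi> m m z)"

definition xg_pi_m :: "real \<Rightarrow> real poly \<Rightarrow> (nat \<Rightarrow> real poly) \<Rightarrow> nat \<Rightarrow> nat \<Rightarrow> real \<Rightarrow> real \<Rightarrow> real" where
  "xg_pi_m \<alpha> \<tau> \<pi> m i t z =
     (1 + t * xg_rho \<alpha> \<tau> \<pi> m m z) * poly (\<pi> i) z - t * xg_rho \<alpha> \<tau> \<pi> i m z * poly (\<pi> m) z"

definition xg_nu :: "real \<Rightarrow> real poly \<Rightarrow> (nat \<Rightarrow> real poly) \<Rightarrow> nat \<Rightarrow> real" where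
  "xg_nu \<alpha> \<tau> \<pi> i = integral {-1..1} (\<lambda>z. (poly (\<pi> i) z)\<^sup>2 * xg_weight \<alpha> (poly \<tau>) z)"

definition xg_nu_m :: "real \<Rightarrow> real poly \<Rightarrow> (nat \<Rightarrow> real poly) \<Rightarrow> nat \<Rightarrow> real \<Rightarrow> nat \<Rightarrow> real" where
  "xg_nu_m \<alpha> \<tau> \<pi> m t i = integral {-1..1}
     (\<lambda>z. (xg_pi_m \<alpha> \<tau> \<pi> m i t z)\<^sup>2 * xg_weight \<alpha> (xg_tau_m \<alpha> \<tau> \<pi> m t) z)"

end

theory Submission
  imports Defs
begin

text \<open>With \<open>G = \<rho>\<^sub>m\<^sub>m\<close>, \<open>H = \<rho>\<^sub>i\<^sub>m\<close> and \<open>u = 1 + t G\<close>, one has \<open>G' = \<pi>\<^sub>m\<^sup>2 W\<close> and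
  \<open>H' = \<pi>\<^sub>i \<pi>\<^sub>m W\<close>, and expanding the square gives
  \<open>\<pi>\<^sub>m\<^sub>;\<^sub>i\<^sup>2 W\<^sub>\<tau>\<^sub>m = (u \<pi>\<^sub>i - t H \<pi>\<^sub>m)\<^sup>2 W / u\<^sup>2 = \<pi>\<^sub>i\<^sup>2 W - (t H\<^sup>2 / u)'\<close>.
  Integrating over \<open>[-1,1]\<close> yields \<open>\<nu>\<^sub>m\<^sub>;\<^sub>i = \<nu>\<^sub>i - t \<rho>\<^sub>i\<^sub>m(1)\<^sup>2 / (1 + t \<nu>\<^sub>m)\<close>. Orthogonality
  makes \<open>\<rho>\<^sub>i\<^sub>m(1) = 0\<close> for \<open>i \<noteq> m\<close>, and for \<open>i = m\<close> the right-hand side is \<open>\<nu>\<^sub>m / (1 + t \<nu>\<^sub>m)\<close>.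
  The hypothesis \<open>1 + t \<nu>\<^sub>m > 0\<close> keeps \<open>u\<close> positive on \<open>[-1,1]\<close>, since \<open>G\<close> increases from
  \<open>0\<close> to \<open>\<nu>\<^sub>m\<close>.\<close>

lemma has_real_derivative_integral_upper:
  fixes h :: "real \<Rightarrow> real"
  assumes "continuous_on {a..b} h" "z \<in> {a..b}"
  shows "((\<lambda>x. integral {a..x} h) has_real_derivative h z) (at z within {a..b})"
  using integral_has_vector_derivative[OF assms]
  by (simp add: has_real_derivative_iff_has_vector_derivative)

lemma has_integral_rank_one_perturbation:
  fixes f g w :: "real \<Rightarrow> real" and a b t :: real
  defines "G \<equiv> \<lambda>z. integral {a..z} (\<lambda>x. (g x)\<^sup>2 * w x)"
    and "H \<equiv> \<lambda>z. integral {a..z} (\<lambda>x. f x * g x * w x)"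
  assumes "a \<le> b" and cont: "continuous_on {a..b} f" "continuous_on {a..b} g" "continuous_on {a..b} w"
    and u_nz: "\<And>z. z \<in> {a..b} \<Longrightarrow> 1 + t * G z \<noteq> 0"
  shows "((\<lambda>z. ((1 + t * G z) * f z - t * H z * g z)\<^sup>2 * w z / (1 + t * G z)\<^sup>2)
           has_integral integral {a..b} (\<lambda>z. (f z)\<^sup>2 * w z) - t * (H b)\<^sup>2 / (1 + t * G b)) {a..b}"
proof -
  define F where "F z = t * (H z)\<^sup>2 / (1 + t * G z)" for z
  define F' where "F' z = (t * (2 * H z * (f z * g z * w z)) * (1 + t * G z)
                     - t * (H z)\<^sup>2 * (t * ((g z)\<^sup>2 * w z))) / (1 + t * G z)\<^sup>2" for z
  have F_deriv: "(F has_vector_derivative F' z) (at z within {a..b})" if z: "z \<in> {a..b}" for z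
  proof -
    have dH: "(H has_real_derivative f z * g z * w z) (at z within {a..b})"
      unfolding H_def using cont z
      by (intro has_real_derivative_integral_upper continuous_intros) auto
    have dG: "(G has_real_derivative (g z)\<^sup>2 * w z) (at z within {a..b})"
      unfolding G_def using cont z
      by (intro has_real_derivative_integral_upper continuous_intros) auto
    have "(F has_real_derivative F' z) (at z within {a..b})"
      using DERIV_divide[OF DERIV_cmult[of _ _ _ _ t, OF DERIV_power[where n = 2, OF dH]]
                            DERIV_add[OF DERIV_const DERIV_cmult[OF dG]] u_nz[OF z]]
      unfolding F_def F'_def by (simp add: power2_eq_square algebra_simps)
    then show ?thesis by (simp add: has_real_derivative_iff_has_vector_derivative)
  qed
  have "(F' has_integral F b - F a) {a..b}"
    using \<open>a \<le> b\<close> F_deriv by (intro fundamental_theorem_of_calculus) auto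
  moreover have "((\<lambda>z. (f z)\<^sup>2 * w z) has_integral integral {a..b} (\<lambda>z. (f z)\<^sup>2 * w z)) {a..b}"
    using cont by (intro integrable_integral integrable_continuous_interval continuous_intros)
  ultimately have "((\<lambda>z. (f z)\<^sup>2 * w z - F' z) has_integral
                      integral {a..b} (\<lambda>z. (f z)\<^sup>2 * w z) - (F b - F a)) {a..b}"
    by (intro has_integral_diff)
  moreover have "H a = 0" by (simp add: H_def)
  ultimately have "((\<lambda>z. (f z)\<^sup>2 * w z - F' z) has_integral
                      integral {a..b} (\<lambda>z. (f z)\<^sup>2 * w z) - t * (H b)\<^sup>2 / (1 + t * G b)) {a..b}"
    by (simp add: F_def)
  moreover have "(f z)\<^sup>2 * w z - F' z
                  = ((1 + t * G z) * f z - t * H z * g z)\<^sup>2 * w z / (1 + t * G z)\<^sup>2"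
    if "z \<in> {a..b}" for z
    using u_nz[OF that] unfolding F'_def
    by (simp add: divide_simps) (simp add: power2_eq_square algebra_simps)
  ultimately show ?thesis
    by (rule has_integral_eq[rotated]) simp
qed

lemma one_plus_integral_upper_pos:
  fixes h :: "real \<Rightarrow> real"
  assumes cont: "continuous_on {a..b} h" and nonneg: "\<And>x. x \<in> {a..b} \<Longrightarrow> 0 \<le> h x"
    and pos: "0 < 1 + t * integral {a..b} h" and z: "z \<in> {a..b}"
  shows "0 < 1 + t * integral {a..z} h"
proof -
  have int: "h integrable_on {a..c}" if "c \<le> b" for c
    using that by (intro integrable_continuous_interval continuous_on_subset[OF cont]) auto
  have lo: "0 \<le> integral {a..z} h"
    using z nonneg by (intro integral_nonneg int) auto
  have hi: "integral {a..z} h \<le> integral {a..b} h"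
    using z nonneg by (intro integral_subset_le int) auto
  show ?thesis
  proof (cases "0 \<le> t")
    case True
    then show ?thesis using lo by (simp add: add_pos_nonneg)
  next
    case False
    then have "t * integral {a..b} h \<le> t * integral {a..z} h"
      using hi by (simp add: mult_left_mono_neg)
    then show ?thesis using pos by linarith
  qed
qed

lemma integral_poly_square_weight_pos:
  fixes p :: "real poly" and w :: "real \<Rightarrow> real"
  assumes "a < b" "p \<noteq> 0" and cont: "continuous_on {a..b} w"
    and nonneg: "\<And>x. x \<in> {a..b} \<Longrightarrow> 0 \<le> w x" and nz: "\<And>x. x \<in> {a<..<b} \<Longrightarrow> w x \<noteq> 0"
  shows "0 < integral {a..b} (\<lambda>x. (poly p x)\<^sup>2 * w x)"
proof -
  have ge: "0 \<le> integral {a..b} (\<lambda>x. (poly p x)\<^sup>2 * w x)"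
    using cont nonneg by (intro integral_nonneg integrable_continuous_interval continuous_intros) auto
  have "integral {a..b} (\<lambda>x. (poly p x)\<^sup>2 * w x) \<noteq> 0"
  proof
    assume "integral {a..b} (\<lambda>x. (poly p x)\<^sup>2 * w x) = 0"
    moreover have "continuous_on {a..b} (\<lambda>x. (poly p x)\<^sup>2 * w x)"
      using cont by (intro continuous_intros)
    moreover have "0 \<le> (poly p x)\<^sup>2 * w x" if "x \<in> {a..b}" for x
      using nonneg[OF that] by simp
    ultimately have "\<forall>x\<in>{a..b}. (poly p x)\<^sup>2 * w x = 0"
      using integral_eq_0_iff[OF _ \<open>a < b\<close>] by blast
    then have "{a<..<b} \<subseteq> {x. poly p x = 0}"
      using nz by auto
    moreover have "finite {x. poly p x = 0}"
      using \<open>p \<noteq> 0\<close> by (rule poly_roots_finite)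
    ultimately show False
      using \<open>a < b\<close> infinite_Ioo finite_subset by blast
  qed
  with ge show ?thesis by linarith
qed

lemma integral_cong_Ioo:
  fixes f g :: "real \<Rightarrow> real"
  assumes "\<And>x. x \<in> {a<..<b} \<Longrightarrow> f x = g x" "c \<le> b"
  shows "integral {a..c} f = integral {a..c} g"
  using assms by (intro integral_spike[of "{a, b}"]) auto

text \<open>For \<open>\<alpha> = k + 1/2\<close> this agrees with \<open>xg_weight \<alpha> (poly \<tau>)\<close> on \<open>(-1,1)\<close>; unlike
  \<open>xg_weight\<close> (where \<open>0 powr 0 = 0\<close> at \<open>\<plusminus>1\<close>) it is continuous on \<open>[-1,1]\<close> when \<open>\<tau>\<close> has no zeros there.\<close>
definition gegenbauer_weight :: "nat \<Rightarrow> real poly \<Rightarrow> real \<Rightarrow> real" where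
  "gegenbauer_weight k \<tau> z = (1 - z\<^sup>2) ^ k / (poly \<tau> z)\<^sup>2"

lemma xg_weight_half_integer:
  assumes "z \<in> {-1<..<1}"
  shows "xg_weight (real k + 1/2) f z = (1 - z\<^sup>2) ^ k / (f z)\<^sup>2"
proof -
  have "0 < 1 - z\<^sup>2"
    using assms abs_square_less_1[of z] by auto
  then show ?thesis by (simp add: xg_weight_def powr_realpow)
qed

lemma gegenbauer_weight_nonneg: "z \<in> {-1..1} \<Longrightarrow> 0 \<le> gegenbauer_weight k \<tau> z"
  using abs_square_le_1[of z] by (auto simp: gegenbauer_weight_def)

lemma gegenbauer_weight_nonzero:
  "z \<in> {-1<..<1} \<Longrightarrow> poly \<tau> z \<noteq> 0 \<Longrightarrow> gegenbauer_weight k \<tau> z \<noteq> 0"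
  using abs_square_less_1[of z] by (auto simp: gegenbauer_weight_def)

lemma continuous_on_gegenbauer_weight:
  "\<forall>z\<in>S. poly \<tau> z \<noteq> 0 \<Longrightarrow> continuous_on S (gegenbauer_weight k \<tau>)"
  unfolding gegenbauer_weight_def by (intro continuous_intros) auto

lemma xg_rho_half_integer:
  assumes "z \<le> 1"
  shows "xg_rho (real k + 1/2) \<tau> \<pi> i j z
           = integral {-1..z} (\<lambda>x. poly (\<pi> i) x * poly (\<pi> j) x * gegenbauer_weight k \<tau> x)"
  unfolding xg_rho_def using assms
  by (intro integral_cong_Ioo[where b = 1]) (simp_all add: xg_weight_half_integer gegenbauer_weight_def)

lemma xg_nu_half_integer:
  "xg_nu (real k + 1/2) \<tau> \<pi> i = integral {-1..1} (\<lambda>z. (poly (\<pi> i) z)\<^sup>2 * gegenbauer_weight k \<tau> z)"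
  unfolding xg_nu_def
  by (rule integral_cong_Ioo[where b = 1]) (simp_all add: xg_weight_half_integer gegenbauer_weight_def)

lemma xg_rho_diagonal: "xg_rho \<alpha> \<tau> \<pi> i i 1 = xg_nu \<alpha> \<tau> \<pi> i"
  by (simp add: xg_rho_def xg_nu_def power2_eq_square)

lemma xg_nu_pos:
  assumes "\<forall>z\<in>{-1..1}. poly \<tau> z \<noteq> 0" "\<pi> i \<noteq> 0"
  shows "0 < xg_nu (real k + 1/2) \<tau> \<pi> i"
  unfolding xg_nu_half_integer using assms continuous_on_gegenbauer_weight[OF assms(1)]
  by (intro integral_poly_square_weight_pos gegenbauer_weight_nonneg gegenbauer_weight_nonzero) auto

lemma one_plus_xg_rho_pos:
  assumes tau_nz: "\<forall>z\<in>{-1..1}. poly \<tau> z \<noteq> 0"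
    and pos: "0 < 1 + t * xg_nu (real k + 1/2) \<tau> \<pi> m" and z: "z \<in> {-1..1}"
  shows "0 < 1 + t * xg_rho (real k + 1/2) \<tau> \<pi> m m z"
proof -
  have "0 < 1 + t * integral {-1..z} (\<lambda>x. (poly (\<pi> m) x)\<^sup>2 * gegenbauer_weight k \<tau> x)"
  proof (rule one_plus_integral_upper_pos[OF _ _ _ z])
    show "continuous_on {-1..1} (\<lambda>x. (poly (\<pi> m) x)\<^sup>2 * gegenbauer_weight k \<tau> x)"
      using continuous_on_gegenbauer_weight[OF tau_nz] by (intro continuous_intros)
    show "0 \<le> (poly (\<pi> m) x)\<^sup>2 * gegenbauer_weight k \<tau> x" if "x \<in> {-1..1}" for x
      using gegenbauer_weight_nonneg[OF that] by simp
    show "0 < 1 + t * integral {-1..1} (\<lambda>x. (poly (\<pi> m) x)\<^sup>2 * gegenbauer_weight k \<tau> x)"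
      using pos by (simp add: xg_nu_half_integer)
  qed
  then show ?thesis
    using z xg_rho_half_integer[of z k \<tau> \<pi> m m] by (simp add: power2_eq_square)
qed

lemma xg_nu_m_formula:
  assumes tau_nz: "\<forall>z\<in>{-1..1}. poly \<tau> z \<noteq> 0"
    and u_nz: "\<And>z. z \<in> {-1..1} \<Longrightarrow> 1 + t * xg_rho (real k + 1/2) \<tau> \<pi> m m z \<noteq> 0"
  shows "xg_nu_m (real k + 1/2) \<tau> \<pi> m t i
           = xg_nu (real k + 1/2) \<tau> \<pi> i
             - t * (xg_rho (real k + 1/2) \<tau> \<pi> i m 1)\<^sup>2 / (1 + t * xg_nu (real k + 1/2) \<tau> \<pi> m)"
proof -
  let ?\<alpha> = "real k + 1/2" and ?w = "gegenbauer_weight k \<tau>"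
  let ?G = "\<lambda>z. integral {-1..z} (\<lambda>x. (poly (\<pi> m) x)\<^sup>2 * ?w x)"
  let ?H = "\<lambda>z. integral {-1..z} (\<lambda>x. poly (\<pi> i) x * poly (\<pi> m) x * ?w x)"
  have rho_G: "xg_rho ?\<alpha> \<tau> \<pi> m m z = ?G z" if "z \<le> 1" for z
    using xg_rho_half_integer[OF that] by (simp add: power2_eq_square)
  have rho_H: "xg_rho ?\<alpha> \<tau> \<pi> i m z = ?H z" if "z \<le> 1" for z
    using xg_rho_half_integer[OF that] by simp
  have "((\<lambda>z. ((1 + t * ?G z) * poly (\<pi> i) z - t * ?H z * poly (\<pi> m) z)\<^sup>2 * ?w z / (1 + t * ?G z)\<^sup>2)
          has_integral integral {-1..1} (\<lambda>z. (poly (\<pi> i) z)\<^sup>2 * ?w z) - t * (?H 1)\<^sup>2 / (1 + t * ?G 1))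
        {-1..1}"
    using u_nz rho_G continuous_on_gegenbauer_weight[OF tau_nz]
    by (intro has_integral_rank_one_perturbation continuous_on_poly continuous_on_id) auto
  moreover have "xg_nu_m ?\<alpha> \<tau> \<pi> m t i
      = integral {-1..1} (\<lambda>z. ((1 + t * ?G z) * poly (\<pi> i) z - t * ?H z * poly (\<pi> m) z)\<^sup>2 * ?w z
                              / (1 + t * ?G z)\<^sup>2)"
    unfolding xg_nu_m_def xg_pi_m_def xg_tau_m_def
  proof (rule integral_cong_Ioo[where b = 1])
    fix x :: real assume "x \<in> {-1<..<1}"
    then show "((1 + t * xg_rho ?\<alpha> \<tau> \<pi> m m x) * poly (\<pi> i) x - t * xg_rho ?\<alpha> \<tau> \<pi> i m x * poly (\<pi> m) x)\<^sup>2
        * xg_weight ?\<alpha> (\<lambda>z. poly \<tau> z * (1 + t * xg_rho ?\<alpha> \<tau> \<pi> m m z)) x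
      = ((1 + t * ?G x) * poly (\<pi> i) x - t * ?H x * poly (\<pi> m) x)\<^sup>2 * ?w x / (1 + t * ?G x)\<^sup>2"
      by (simp add: xg_weight_half_integer gegenbauer_weight_def rho_G rho_H power_mult_distrib)
  qed simp
  ultimately show ?thesis
    using rho_H[of 1] rho_G[of 1] xg_rho_diagonal[of ?\<alpha> \<tau> \<pi> m]
    by (simp add: integral_unique xg_nu_half_integer)
qed

theorem mainTheorem13:
  fixes \<alpha> :: real and \<tau> :: "real poly" and \<pi> :: "nat \<Rightarrow> real poly"
    and lam :: "nat \<Rightarrow> real" and m :: nat and t :: real
  assumes alpha: "\<exists>k::nat. \<alpha> = real k + 1/2"
    and tau_nz: "\<forall>z\<in>{-1..1}. poly \<tau> z \<noteq> 0"
    and family: "xg_eigenfamily \<alpha> \<tau> \<pi> lam"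
    and lam_inj: "inj lam"
    and rho_rat: "\<forall>i j. \<exists>p q. \<forall>z\<in>{-1..1}. poly q z \<noteq> 0 \<and>
                     xg_rho \<alpha> \<tau> \<pi> i j z = poly p z / poly q z"
    and tau_m_poly: "\<forall>m' t'. \<exists>P. \<forall>z\<in>{-1..1}. xg_tau_m \<alpha> \<tau> \<pi> m' t' z = poly P z"
    and pi_m_poly: "\<forall>m' i t'. \<exists>P. \<forall>z\<in>{-1..1}. xg_pi_m \<alpha> \<tau> \<pi> m' i t' z = poly P z"
    and orth: "\<forall>i j. i \<noteq> j \<longrightarrow>
                 integral {-1..1} (\<lambda>z. poly (\<pi> i) z * poly (\<pi> j) z * xg_weight \<alpha> (poly \<tau>) z) = 0"
    and pos: "1 + t * xg_nu \<alpha> \<tau> \<pi> m > 0"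
  shows "\<forall>i. inverse (xg_nu_m \<alpha> \<tau> \<pi> m t i)
              = inverse (xg_nu \<alpha> \<tau> \<pi> i) + (if i = m then t else 0)"
proof -
  obtain k :: nat where k: "\<alpha> = real k + 1/2"
    using alpha by blast
  have "\<pi> m \<noteq> 0"
    using family by (simp add: xg_eigenfamily_def xg_eigenpoly_def)
  then have nu_m_pos: "0 < xg_nu \<alpha> \<tau> \<pi> m"
    unfolding k by (rule xg_nu_pos[OF tau_nz])
  have nu_mi: "xg_nu_m \<alpha> \<tau> \<pi> m t i
      = xg_nu \<alpha> \<tau> \<pi> i - t * (xg_rho \<alpha> \<tau> \<pi> i m 1)\<^sup>2 / (1 + t * xg_nu \<alpha> \<tau> \<pi> m)" for i
    unfolding k using tau_nz one_plus_xg_rho_pos[OF tau_nz pos[unfolded k]]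
    by (intro xg_nu_m_formula) (simp_all add: less_imp_neq[symmetric])
  show ?thesis
  proof
    fix i
    show "inverse (xg_nu_m \<alpha> \<tau> \<pi> m t i) = inverse (xg_nu \<alpha> \<tau> \<pi> i) + (if i = m then t else 0)"
    proof (cases "i = m")
      case True
      let ?\<nu> = "xg_nu \<alpha> \<tau> \<pi> m"
      have "xg_nu_m \<alpha> \<tau> \<pi> m t m = ?\<nu> / (1 + t * ?\<nu>)"
        using nu_mi[of m] pos xg_rho_diagonal[of \<alpha> \<tau> \<pi> m]
        by (simp add: field_simps power2_eq_square)
      then show ?thesis
        using True nu_m_pos by (simp add: add_divide_distrib inverse_eq_divide)
    next
      case False
      then show ?thesis
        using nu_mi[of i] orth by (simp add: xg_rho_def)
    qed
  qed
qed

end
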